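(* Consider a sequence of samples indexed by $N$ of units $i=1,\dots,N$ observed at times $t=-L,\dots,0,1$ with binary treatment $A_i$ applied at $t=1$, where potential outcomes satisfy $Y_{it}(0)-Y_{i,t-1}(0)=\delta_t+\epsilon_{it,0}$ and $Y_{it}(1)-Y_{it}(0)=\mathbb{I}(t=1)(\psi+\epsilon_{it,1})$, with $\psi_i=\psi+\epsilon_{i1,1}$. Assume $Y_{it}=\mathbb{I}(t=1)A_iY_{it}(1)+(1-\mathbb{I}(t=1)A_i)Y_{it}(0)$; $N^{-1}\sum_{i=1}^N\epsilon_{it,a}\to 0$ almost surely for $a=0,1$; $N^{-1}\sum_iA_i\to p\in(0,1)$ almost surely; $1\le\sum_iA_i\le N-1$; and $|\epsilon_{it,a}|\le\zeta$ for all $i,t,a$. Let $\hat\psi_i^{DiD}$ be the unit-level difference-in-differences estimator ($Y_{i1}-Y_{i0}-[\sum_j(1-A_j)]^{-1}\sum_j(1-A_j)(Y_{j1}-Y_{j0})$ for treated $i$, and $Y_{i0}+[\sum_jA_j]^{-1}\sum_jA_j(Y_{j1}-Y_{j0})-Y_{i1}$ for untreated $i$), and $\tilde\tau_i=\{\tau\ge 0:\psi_i\in[\hat\psi_i^{DiD}-\tau,\hat\psi_i^{DiD}+\tau]\}$. (i) If in addition $[\sum_iA_i]^{-1}\sum_iA_i\epsilon_{i1,0}\to 0$ almost surely as $N\to\infty$, then there is a sequence $r_N\to 0$ almost surely such that for every treated unit $i$, every $q_0\ge\zeta+r_N$ lies in $\tilde\tau_i$. (ii) If in addition both $[\sum_iA_i]^{-1}\sum_iA_i\epsilon_{i1,0}\to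 0$ and $[\sum_iA_i]^{-1}\sum_iA_i\epsilon_{i1,1}\to 0$ almost surely, then there is a sequence $r_N\to 0$ almost surely such that for every untreated unit $i$, every $q_1\ge 2\zeta+r_N$ lies in $\tilde\tau_i$. *)

theory Defs
  imports "HOL-Probability.Probability"
begin

definition did_est :: "nat \<Rightarrow> (nat \<Rightarrow> bool) \<Rightarrow> (nat \<Rightarrow> int \<Rightarrow> real) \<Rightarrow> nat \<Rightarrow> real" where
  "did_est N A Y i =
     (if A i then
        Y i 1 - Y i 0
        - (\<Sum>j\<in>{1..N}. of_bool (\<not> A j) * (Y j 1 - Y j 0)) / (\<Sum>j\<in>{1..N}. of_bool (\<not> A j))
      else
        Y i 0 + (\<Sum>j\<in>{1..N}. of_bool (A j) * (Y j 1 - Y j 0)) / (\<Sum>j\<in>{1..N}. of_bool (A j))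
        - Y i 1)"

definition tau_tilde :: "real \<Rightarrow> real \<Rightarrow> real set" where
  "tau_tilde psi_i est = {\<tau>. \<tau> \<ge> 0 \<and> psi_i \<in> {est - \<tau> .. est + \<tau>}}"

end

theory Submission
  imports Defs
begin

text \<open>
  Write \<open>e\<^sub>j = \<epsilon>\<^sub>j\<^sub>1\<^sub>,\<^sub>0\<close> and \<open>v\<^sub>j = \<epsilon>\<^sub>j\<^sub>1\<^sub>,\<^sub>1\<close>. The first differences are
  \<open>Y\<^sub>j\<^sub>1 - Y\<^sub>j\<^sub>0 = \<delta>\<^sub>1 + e\<^sub>j + A\<^sub>j (\<psi> + v\<^sub>j)\<close>, so the error \<open>\<psi>\<^sub>i - \<psi>\<^sub>i\<^sup>D\<^sup>i\<^sup>D\<close> of the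
  estimator is the control-group mean of \<open>e\<close> minus \<open>e\<^sub>i\<close> for a treated unit, and
  \<open>e\<^sub>i + v\<^sub>i\<close> minus the treated-group mean of \<open>e + v\<close> for a control unit. Hence the
  error is at most \<open>\<zeta>\<close> (resp. \<open>2\<zeta>\<close>) plus the absolute value of that group mean, which
  serves as \<open>r\<^sub>N\<close>. The treated-group means vanish by hypothesis; the control-group mean
  is an affine combination of the overall mean, the treated mean and the treated share,
  and vanishes almost surely because the share tends to \<open>p < 1\<close>.
\<close>

definition group_mean :: "nat \<Rightarrow> (nat \<Rightarrow> bool) \<Rightarrow> (nat \<Rightarrow> real) \<Rightarrow> real" where
  "group_mean N P f = (\<Sum>j\<in>{1..N}. of_bool (P j) * f j) / (\<Sum>j\<in>{1..N}. of_bool (P j))"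

lemma group_mean_cong:
  assumes "\<And>j. j \<in> {1..N} \<Longrightarrow> P j \<Longrightarrow> f j = g j"
  shows "group_mean N P f = group_mean N P g"
  unfolding group_mean_def using assms by (intro arg_cong2[where f = "(/)"] sum.cong) auto

lemma group_mean_add: "group_mean N P (\<lambda>j. f j + g j) = group_mean N P f + group_mean N P g"
  by (simp add: group_mean_def distrib_left sum.distrib add_divide_distrib)

lemma group_size_pos:
  fixes N :: nat
  assumes "\<exists>j\<in>{1..N}. P j"
  shows "(\<Sum>j\<in>{1..N}. of_bool (P j) :: real) > 0"
proof -
  from assms obtain i where "i \<in> {1..N}" "P i" ..
  then show ?thesis by (intro sum_pos2[where i = i]) auto
qed

lemma both_groups_nonempty:
  fixes N :: nat
  assumes "1 \<le> (\<Sum>j\<in>{1..N}. of_bool (P j) :: real)" "(\<Sum>j\<in>{1..N}. of_bool (P j) :: real) \<le> real N - 1"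
  shows "(\<exists>j\<in>{1..N}. P j) \<and> (\<exists>j\<in>{1..N}. \<not> P j)"
proof (intro conjI; rule ccontr)
  assume "\<not> (\<exists>j\<in>{1..N}. P j)"
  then have "(\<Sum>j\<in>{1..N}. of_bool (P j) :: real) = 0" by simp
  with assms(1) show False by simp
next
  assume "\<not> (\<exists>j\<in>{1..N}. \<not> P j)"
  then have "(\<Sum>j\<in>{1..N}. of_bool (P j) :: real) = real N" by simp
  with assms(2) show False by simp
qed

lemma group_mean_add_const:
  assumes "\<exists>j\<in>{1..N}. P j"
  shows "group_mean N P (\<lambda>j. c + f j) = c + group_mean N P f"
proof -
  have "(\<Sum>j\<in>{1..N}. of_bool (P j) * (c + f j))
      = c * (\<Sum>j\<in>{1..N}. of_bool (P j)) + (\<Sum>j\<in>{1..N}. of_bool (P j) * f j)"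
    by (simp add: algebra_simps sum.distrib sum_distrib_left del: sum_of_bool_eq)
  then show ?thesis
    using group_size_pos[OF assms] by (simp add: group_mean_def add_divide_distrib del: sum_of_bool_eq)
qed

lemma group_sum_eq_mean_times_size:
  "(\<Sum>j\<in>{1..N}. of_bool (P j) * f j) = group_mean N P f * (\<Sum>j\<in>{1..N}. of_bool (P j))"
proof (cases "\<exists>j\<in>{1..N}. P j")
  case True
  then show ?thesis using group_size_pos[OF True] by (simp add: group_mean_def)
next
  case False
  then show ?thesis by (simp add: group_mean_def)
qed

text \<open>No group needs to be nonempty here: an empty group makes both sides \<open>0\<close>, as \<open>x / 0 = 0\<close>.\<close>
lemma complement_group_mean_eq:
  assumes "N \<ge> 1"
  shows "group_mean N (\<lambda>j. \<not> P j) f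
    = ((\<Sum>j\<in>{1..N}. f j) / N - group_mean N P f * ((\<Sum>j\<in>{1..N}. of_bool (P j)) / N))
      / (1 - (\<Sum>j\<in>{1..N}. of_bool (P j)) / N)"
proof -
  have complement_sum: "(\<Sum>j\<in>{1..N}. of_bool (\<not> P j) * g j)
      = (\<Sum>j\<in>{1..N}. g j) - (\<Sum>j\<in>{1..N}. of_bool (P j) * g j)"
    for g :: "nat \<Rightarrow> real"
  proof -
    have "(\<Sum>j\<in>{1..N}. of_bool (\<not> P j) * g j) + (\<Sum>j\<in>{1..N}. of_bool (P j) * g j)
        = (\<Sum>j\<in>{1..N}. g j)"
      by (subst sum.distrib[symmetric]) (rule sum.cong, auto)
    then show ?thesis by simp
  qed
  define n where "n = (\<Sum>j\<in>{1..N}. of_bool (P j) :: real)"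
  define S where "S = (\<Sum>j\<in>{1..N}. f j)"
  have size: "(\<Sum>j\<in>{1..N}. of_bool (\<not> P j) :: real) = N - n"
    using complement_sum[of "\<lambda>_. 1"] by (simp add: n_def del: sum_of_bool_eq)
  have "group_mean N (\<lambda>j. \<not> P j) f = (S - group_mean N P f * n) / (N - n)"
    by (simp only: group_mean_def[of N "\<lambda>j. \<not> P j"] complement_sum size
        group_sum_eq_mean_times_size[of P f N] S_def n_def)
  also have "\<dots> = (S / N - group_mean N P f * (n / N)) / (1 - n / N)"
    using assms by (cases "n = N") (simp_all add: field_simps)
  finally show ?thesis unfolding S_def n_def .
qed

lemma complement_group_mean_tendsto_zero:
  fixes P :: "nat \<Rightarrow> nat \<Rightarrow> bool" and f :: "nat \<Rightarrow> nat \<Rightarrow> real"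
  assumes "(\<lambda>N. (\<Sum>j\<in>{1..N}. f N j) / real N) \<longlonglongrightarrow> 0"
    and "(\<lambda>N. (\<Sum>j\<in>{1..N}. of_bool (P N j)) / real N) \<longlonglongrightarrow> p" and "p \<noteq> 1"
    and "(\<lambda>N. group_mean N (P N) (f N)) \<longlonglongrightarrow> 0"
  shows "(\<lambda>N. group_mean N (\<lambda>j. \<not> P N j) (f N)) \<longlonglongrightarrow> 0"
proof -
  let ?share = "\<lambda>N. (\<Sum>j\<in>{1..N}. of_bool (P N j)) / real N"
  have "(\<lambda>N. ((\<Sum>j\<in>{1..N}. f N j) / real N - group_mean N (P N) (f N) * ?share N) / (1 - ?share N))
      \<longlonglongrightarrow> (0 - 0 * p) / (1 - p)"
    using assms by (intro tendsto_intros) auto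
  moreover have "\<forall>\<^sub>F N in sequentially.
      ((\<Sum>j\<in>{1..N}. f N j) / real N - group_mean N (P N) (f N) * ?share N) / (1 - ?share N)
      = group_mean N (\<lambda>j. \<not> P N j) (f N)"
    using eventually_ge_at_top[of 1] by eventually_elim (simp add: complement_group_mean_eq)
  ultimately show ?thesis
    by (auto intro: Lim_transform_eventually)
qed

lemma did_est_group_means:
  "did_est N A Y i =
    (if A i then (Y i 1 - Y i 0) - group_mean N (\<lambda>j. \<not> A j) (\<lambda>j. Y j 1 - Y j 0)
     else group_mean N A (\<lambda>j. Y j 1 - Y j 0) - (Y i 1 - Y i 0))"
  by (simp add: did_est_def group_mean_def)

lemma did_est_error_treated:
  assumes diff: "\<And>j. j \<in> {1..N} \<Longrightarrow> Y j 1 - Y j 0 = \<beta> + e j + of_bool (A j) * (\<psi> + v j)"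
    and i: "i \<in> {1..N}" "A i" and controls: "\<exists>j\<in>{1..N}. \<not> A j"
  shows "\<psi> + v i - did_est N A Y i = group_mean N (\<lambda>j. \<not> A j) e - e i"
proof -
  have "group_mean N (\<lambda>j. \<not> A j) (\<lambda>j. Y j 1 - Y j 0) = group_mean N (\<lambda>j. \<not> A j) (\<lambda>j. \<beta> + e j)"
    using diff by (intro group_mean_cong) auto
  also have "\<dots> = \<beta> + group_mean N (\<lambda>j. \<not> A j) e"
    using controls by (rule group_mean_add_const)
  finally show ?thesis
    using diff[OF i(1)] i(2) by (simp add: did_est_group_means)
qed

lemma did_est_error_control:
  assumes diff: "\<And>j. j \<in> {1..N} \<Longrightarrow> Y j 1 - Y j 0 = \<beta> + e j + of_bool (A j) * (\<psi> + v j)"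
    and i: "i \<in> {1..N}" "\<not> A i" and treated: "\<exists>j\<in>{1..N}. A j"
  shows "\<psi> + v i - did_est N A Y i = e i + v i - group_mean N A (\<lambda>j. e j + v j)"
proof -
  have "group_mean N A (\<lambda>j. Y j 1 - Y j 0) = group_mean N A (\<lambda>j. (\<beta> + \<psi>) + (e j + v j))"
    using diff by (intro group_mean_cong) auto
  also have "\<dots> = \<beta> + \<psi> + group_mean N A (\<lambda>j. e j + v j)"
    using treated by (rule group_mean_add_const)
  finally show ?thesis
    using diff[OF i(1)] i(2) by (simp add: did_est_group_means)
qed

lemma mem_tau_tilde_iff: "q \<in> tau_tilde x e \<longleftrightarrow> \<bar>x - e\<bar> \<le> q"
  by (auto simp: tau_tilde_def)

lemma vanishing_radius_of_eventual_bound: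
  fixes \<theta> est :: "nat \<Rightarrow> 'w \<Rightarrow> nat \<Rightarrow> real" and \<rho> :: "nat \<Rightarrow> 'w \<Rightarrow> real"
  assumes bound: "\<And>N \<omega> i. \<omega> \<in> S \<Longrightarrow> N \<ge> N\<^sub>0 \<Longrightarrow> i \<in> {1..N} \<Longrightarrow> P N \<omega> i \<Longrightarrow>
                    \<bar>\<theta> N \<omega> i - est N \<omega> i\<bar> \<le> c + \<rho> N \<omega>"
    and rate: "AE \<omega> in M. (\<lambda>N. \<rho> N \<omega>) \<longlonglongrightarrow> 0"
  shows "\<exists>r. (AE \<omega> in M. (\<lambda>N. r N \<omega>) \<longlonglongrightarrow> 0)
           \<and> (\<forall>\<omega>\<in>S. \<forall>N. \<forall>i\<in>{1..N}. P N \<omega> i \<longrightarrow>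
                (\<forall>q. q \<ge> c + r N \<omega> \<longrightarrow> q \<in> tau_tilde (\<theta> N \<omega> i) (est N \<omega> i)))"
proof (intro exI conjI)
  \<comment> \<open>The finitely many samples below \<open>N\<^sub>0\<close> get a radius covering all their errors.\<close>
  define r where "r N \<omega> = (if N < N\<^sub>0 then (\<Sum>i\<in>{1..N}. \<bar>\<theta> N \<omega> i - est N \<omega> i\<bar>) - c else \<rho> N \<omega>)"
    for N \<omega>
  show "AE \<omega> in M. (\<lambda>N. r N \<omega>) \<longlonglongrightarrow> 0"
    using rate
  proof eventually_elim
    case (elim \<omega>)
    have "\<forall>\<^sub>F N in sequentially. \<rho> N \<omega> = r N \<omega>"
      using eventually_ge_at_top[of N\<^sub>0] by eventually_elim (simp add: r_def)
    with elim show ?case by (rule Lim_transform_eventually)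
  qed
  show "\<forall>\<omega>\<in>S. \<forall>N. \<forall>i\<in>{1..N}. P N \<omega> i \<longrightarrow>
          (\<forall>q. q \<ge> c + r N \<omega> \<longrightarrow> q \<in> tau_tilde (\<theta> N \<omega> i) (est N \<omega> i))"
  proof (intro ballI allI impI)
    fix \<omega> N i q
    assume \<omega>: "\<omega> \<in> S" and i: "i \<in> {1..N}" "P N \<omega> i" and q: "c + r N \<omega> \<le> q"
    have "\<bar>\<theta> N \<omega> i - est N \<omega> i\<bar> \<le> c + r N \<omega>"
    proof (cases "N < N\<^sub>0")
      case True
      then show ?thesis
        using member_le_sum[OF i(1), of "\<lambda>i. \<bar>\<theta> N \<omega> i - est N \<omega> i\<bar>"] by (simp add: r_def)
    next
      case False
      then show ?thesis using bound[OF \<omega> _ i] by (simp add: r_def)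
    qed
    with q show "q \<in> tau_tilde (\<theta> N \<omega> i) (est N \<omega> i)"
      by (simp add: mem_tau_tilde_iff)
  qed
qed

lemma did_treated_radius:
  fixes Y :: "nat \<Rightarrow> nat \<Rightarrow> int \<Rightarrow> 'w \<Rightarrow> real" and A :: "nat \<Rightarrow> nat \<Rightarrow> 'w \<Rightarrow> bool"
    and e v :: "nat \<Rightarrow> nat \<Rightarrow> 'w \<Rightarrow> real"
  assumes diff: "\<And>N j \<omega>. \<omega> \<in> S \<Longrightarrow> j \<in> {1..N} \<Longrightarrow>
                   Y N j 1 \<omega> - Y N j 0 \<omega> = \<beta> + e N j \<omega> + of_bool (A N j \<omega>) * (\<psi> + v N j \<omega>)"
    and controls: "\<And>N \<omega>. \<omega> \<in> S \<Longrightarrow> N \<ge> 2 \<Longrightarrow> \<exists>j\<in>{1..N}. \<not> A N j \<omega>"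
    and e_bound: "\<And>N j \<omega>. \<omega> \<in> S \<Longrightarrow> j \<in> {1..N} \<Longrightarrow> \<bar>e N j \<omega>\<bar> \<le> \<zeta>"
    and mean: "AE \<omega> in M. (\<lambda>N. (\<Sum>j\<in>{1..N}. e N j \<omega>) / real N) \<longlonglongrightarrow> 0"
    and share: "AE \<omega> in M. (\<lambda>N. (\<Sum>j\<in>{1..N}. of_bool (A N j \<omega>)) / real N) \<longlonglongrightarrow> p" "p \<noteq> 1"
    and treated_mean: "AE \<omega> in M. (\<lambda>N. group_mean N (\<lambda>j. A N j \<omega>) (\<lambda>j. e N j \<omega>)) \<longlonglongrightarrow> 0"
  shows "\<exists>r. (AE \<omega> in M. (\<lambda>N. r N \<omega>) \<longlonglongrightarrow> 0)
           \<and> (\<forall>\<omega>\<in>S. \<forall>N. \<forall>i\<in>{1..N}. A N i \<omega> \<longrightarrow>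
                (\<forall>q. q \<ge> \<zeta> + r N \<omega> \<longrightarrow>
                   q \<in> tau_tilde (\<psi> + v N i \<omega>) (did_est N (\<lambda>j. A N j \<omega>) (\<lambda>j t. Y N j t \<omega>) i)))"
proof (rule vanishing_radius_of_eventual_bound
    [where N\<^sub>0 = 2 and \<rho> = "\<lambda>N \<omega>. \<bar>group_mean N (\<lambda>j. \<not> A N j \<omega>) (\<lambda>j. e N j \<omega>)\<bar>"])
  fix N \<omega> i
  assume \<omega>: "\<omega> \<in> S" and N: "N \<ge> 2" and i: "i \<in> {1..N}" "A N i \<omega>"
  have "\<psi> + v N i \<omega> - did_est N (\<lambda>j. A N j \<omega>) (\<lambda>j t. Y N j t \<omega>) i
      = group_mean N (\<lambda>j. \<not> A N j \<omega>) (\<lambda>j. e N j \<omega>) - e N i \<omega>"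
    using diff[OF \<omega>] i controls[OF \<omega> N] by (rule did_est_error_treated)
  then show "\<bar>\<psi> + v N i \<omega> - did_est N (\<lambda>j. A N j \<omega>) (\<lambda>j t. Y N j t \<omega>) i\<bar>
      \<le> \<zeta> + \<bar>group_mean N (\<lambda>j. \<not> A N j \<omega>) (\<lambda>j. e N j \<omega>)\<bar>"
    using e_bound[OF \<omega> i(1)] by linarith
next
  show "AE \<omega> in M. (\<lambda>N. \<bar>group_mean N (\<lambda>j. \<not> A N j \<omega>) (\<lambda>j. e N j \<omega>)\<bar>) \<longlonglongrightarrow> 0"
    using mean share(1) treated_mean
    by eventually_elim (intro tendsto_rabs_zero complement_group_mean_tendsto_zero[OF _ _ share(2)])
qed

lemma did_control_radius:
  fixes Y :: "nat \<Rightarrow> nat \<Rightarrow> int \<Rightarrow> 'w \<Rightarrow> real" and A :: "nat \<Rightarrow> nat \<Rightarrow> 'w \<Rightarrow> bool"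
    and e v :: "nat \<Rightarrow> nat \<Rightarrow> 'w \<Rightarrow> real"
  assumes diff: "\<And>N j \<omega>. \<omega> \<in> S \<Longrightarrow> j \<in> {1..N} \<Longrightarrow>
                   Y N j 1 \<omega> - Y N j 0 \<omega> = \<beta> + e N j \<omega> + of_bool (A N j \<omega>) * (\<psi> + v N j \<omega>)"
    and treated: "\<And>N \<omega>. \<omega> \<in> S \<Longrightarrow> N \<ge> 2 \<Longrightarrow> \<exists>j\<in>{1..N}. A N j \<omega>"
    and e_bound: "\<And>N j \<omega>. \<omega> \<in> S \<Longrightarrow> j \<in> {1..N} \<Longrightarrow> \<bar>e N j \<omega>\<bar> \<le> \<zeta>"
    and v_bound: "\<And>N j \<omega>. \<omega> \<in> S \<Longrightarrow> j \<in> {1..N} \<Longrightarrow> \<bar>v N j \<omega>\<bar> \<le> \<zeta>"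
    and treated_mean_e: "AE \<omega> in M. (\<lambda>N. group_mean N (\<lambda>j. A N j \<omega>) (\<lambda>j. e N j \<omega>)) \<longlonglongrightarrow> 0"
    and treated_mean_v: "AE \<omega> in M. (\<lambda>N. group_mean N (\<lambda>j. A N j \<omega>) (\<lambda>j. v N j \<omega>)) \<longlonglongrightarrow> 0"
  shows "\<exists>r. (AE \<omega> in M. (\<lambda>N. r N \<omega>) \<longlonglongrightarrow> 0)
           \<and> (\<forall>\<omega>\<in>S. \<forall>N. \<forall>i\<in>{1..N}. \<not> A N i \<omega> \<longrightarrow>
                (\<forall>q. q \<ge> 2 * \<zeta> + r N \<omega> \<longrightarrow>
                   q \<in> tau_tilde (\<psi> + v N i \<omega>) (did_est N (\<lambda>j. A N j \<omega>) (\<lambda>j t. Y N j t \<omega>) i)))"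
proof (rule vanishing_radius_of_eventual_bound
    [where N\<^sub>0 = 2 and \<rho> = "\<lambda>N \<omega>. \<bar>group_mean N (\<lambda>j. A N j \<omega>) (\<lambda>j. e N j \<omega> + v N j \<omega>)\<bar>"])
  fix N \<omega> i
  assume \<omega>: "\<omega> \<in> S" and N: "N \<ge> 2" and i: "i \<in> {1..N}" "\<not> A N i \<omega>"
  have "\<psi> + v N i \<omega> - did_est N (\<lambda>j. A N j \<omega>) (\<lambda>j t. Y N j t \<omega>) i
      = e N i \<omega> + v N i \<omega> - group_mean N (\<lambda>j. A N j \<omega>) (\<lambda>j. e N j \<omega> + v N j \<omega>)"
    using diff[OF \<omega>] i treated[OF \<omega> N] by (rule did_est_error_control)
  then show "\<bar>\<psi> + v N i \<omega> - did_est N (\<lambda>j. A N j \<omega>) (\<lambda>j t. Y N j t \<omega>) i\<bar>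
      \<le> 2 * \<zeta> + \<bar>group_mean N (\<lambda>j. A N j \<omega>) (\<lambda>j. e N j \<omega> + v N j \<omega>)\<bar>"
    using e_bound[OF \<omega> i(1)] v_bound[OF \<omega> i(1)] by linarith
next
  show "AE \<omega> in M. (\<lambda>N. \<bar>group_mean N (\<lambda>j. A N j \<omega>) (\<lambda>j. e N j \<omega> + v N j \<omega>)\<bar>) \<longlonglongrightarrow> 0"
    using treated_mean_e treated_mean_v
    by eventually_elim (use tendsto_add[where a = 0 and b = 0] in \<open>simp add: group_mean_add tendsto_rabs_zero_iff\<close>)
qed

theorem corollary1:
  fixes M :: "'w measure"
    and L :: nat
    and \<delta> :: "int \<Rightarrow> real" and \<psi> :: real and p :: real and \<zeta> :: real
    and \<epsilon> :: "nat \<Rightarrow> nat \<Rightarrow> int \<Rightarrow> nat \<Rightarrow> 'w \<Rightarrow> real"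
    and A :: "nat \<Rightarrow> nat \<Rightarrow> 'w \<Rightarrow> bool"
    and Y0 Y1 Y :: "nat \<Rightarrow> nat \<Rightarrow> int \<Rightarrow> 'w \<Rightarrow> real"
  assumes prob: "prob_space M"
    and trend: "\<And>N i t \<omega>. \<omega> \<in> space M \<Longrightarrow> i \<in> {1..N} \<Longrightarrow> t \<in> {- int L + 1 .. 1} \<Longrightarrow>
                  Y0 N i t \<omega> - Y0 N i (t - 1) \<omega> = \<delta> t + \<epsilon> N i t 0 \<omega>"
    and effect: "\<And>N i t \<omega>. \<omega> \<in> space M \<Longrightarrow> i \<in> {1..N} \<Longrightarrow> t \<in> {- int L .. 1} \<Longrightarrow>
                  Y1 N i t \<omega> - Y0 N i t \<omega> = of_bool (t = 1) * (\<psi> + \<epsilon> N i 1 1 \<omega>)"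
    and observed: "\<And>N i t \<omega>. \<omega> \<in> space M \<Longrightarrow> i \<in> {1..N} \<Longrightarrow> t \<in> {- int L .. 1} \<Longrightarrow>
                  Y N i t \<omega> = of_bool (t = 1) * of_bool (A N i \<omega>) * Y1 N i t \<omega>
                               + (1 - of_bool (t = 1) * of_bool (A N i \<omega>)) * Y0 N i t \<omega>"
    and eps_lln: "\<And>t a. t \<in> {- int L .. 1} \<Longrightarrow> a \<in> {0, 1} \<Longrightarrow>
                  AE \<omega> in M. (\<lambda>N. (\<Sum>i\<in>{1..N}. \<epsilon> N i t a \<omega>) / real N) \<longlonglongrightarrow> 0"
    and p_range: "0 < p" "p < 1"
    and A_lln: "AE \<omega> in M. (\<lambda>N. (\<Sum>i\<in>{1..N}. of_bool (A N i \<omega>)) / real N) \<longlonglongrightarrow> p"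
    and A_bounds: "\<And>N \<omega>. \<omega> \<in> space M \<Longrightarrow> N \<ge> 2 \<Longrightarrow>
                  1 \<le> (\<Sum>i\<in>{1..N}. of_bool (A N i \<omega>) :: real)
                  \<and> (\<Sum>i\<in>{1..N}. of_bool (A N i \<omega>) :: real) \<le> real N - 1"
    and eps_bound: "\<And>N i t a \<omega>. \<omega> \<in> space M \<Longrightarrow> i \<in> {1..N} \<Longrightarrow> t \<in> {- int L .. 1} \<Longrightarrow>
                  a \<in> {0, 1} \<Longrightarrow> \<bar>\<epsilon> N i t a \<omega>\<bar> \<le> \<zeta>"
  shows
    "((AE \<omega> in M. (\<lambda>N. (\<Sum>i\<in>{1..N}. of_bool (A N i \<omega>) * \<epsilon> N i 1 0 \<omega>)
                         / (\<Sum>i\<in>{1..N}. of_bool (A N i \<omega>))) \<longlonglongrightarrow> 0)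
      \<longrightarrow> (\<exists>r :: nat \<Rightarrow> 'w \<Rightarrow> real.
            (AE \<omega> in M. (\<lambda>N. r N \<omega>) \<longlonglongrightarrow> 0)
            \<and> (\<forall>\<omega>\<in>space M. \<forall>N. \<forall>i\<in>{1..N}. A N i \<omega> \<longrightarrow>
                 (\<forall>q0. q0 \<ge> \<zeta> + r N \<omega> \<longrightarrow>
                    q0 \<in> tau_tilde (\<psi> + \<epsilon> N i 1 1 \<omega>)
                                    (did_est N (\<lambda>j. A N j \<omega>) (\<lambda>j t. Y N j t \<omega>) i)))))
     \<and>
     ((AE \<omega> in M. (\<lambda>N. (\<Sum>i\<in>{1..N}. of_bool (A N i \<omega>) * \<epsilon> N i 1 0 \<omega>)
                         / (\<Sum>i\<in>{1..N}. of_bool (A N i \<omega>))) \<longlonglongrightarrow> 0)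
      \<and> (AE \<omega> in M. (\<lambda>N. (\<Sum>i\<in>{1..N}. of_bool (A N i \<omega>) * \<epsilon> N i 1 1 \<omega>)
                         / (\<Sum>i\<in>{1..N}. of_bool (A N i \<omega>))) \<longlonglongrightarrow> 0)
      \<longrightarrow> (\<exists>r :: nat \<Rightarrow> 'w \<Rightarrow> real.
            (AE \<omega> in M. (\<lambda>N. r N \<omega>) \<longlonglongrightarrow> 0)
            \<and> (\<forall>\<omega>\<in>space M. \<forall>N. \<forall>i\<in>{1..N}. \<not> A N i \<omega> \<longrightarrow>
                 (\<forall>q1. q1 \<ge> 2 * \<zeta> + r N \<omega> \<longrightarrow>
                    q1 \<in> tau_tilde (\<psi> + \<epsilon> N i 1 1 \<omega>)
                                    (did_est N (\<lambda>j. A N j \<omega>) (\<lambda>j t. Y N j t \<omega>) i)))))"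
proof -
  have diff: "Y N j 1 \<omega> - Y N j 0 \<omega> = \<delta> 1 + \<epsilon> N j 1 0 \<omega> + of_bool (A N j \<omega>) * (\<psi> + \<epsilon> N j 1 1 \<omega>)"
    if "\<omega> \<in> space M" "j \<in> {1..N}" for N j \<omega>
    using observed[OF that, of 1] observed[OF that, of 0] effect[OF that, of 1] trend[OF that, of 1]
    by (cases "A N j \<omega>") auto
  have groups: "(\<exists>j\<in>{1..N}. A N j \<omega>) \<and> (\<exists>j\<in>{1..N}. \<not> A N j \<omega>)"
    if "\<omega> \<in> space M" "N \<ge> 2" for N \<omega>
    using A_bounds[OF that] by (intro both_groups_nonempty) auto
  have eps: "\<bar>\<epsilon> N j 1 0 \<omega>\<bar> \<le> \<zeta>" "\<bar>\<epsilon> N j 1 1 \<omega>\<bar> \<le> \<zeta>"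
    if "\<omega> \<in> space M" "j \<in> {1..N}" for N j \<omega>
    using eps_bound[OF that] by auto
  let ?e = "\<lambda>N j \<omega>. \<epsilon> N j 1 0 \<omega>" and ?v = "\<lambda>N j \<omega>. \<epsilon> N j 1 1 \<omega>"
  note treated_radius = did_treated_radius[where S = "space M" and M = M and Y = Y and A = A
      and e = ?e and v = ?v and \<beta> = "\<delta> 1" and \<psi> = \<psi>,
      OF diff groups[THEN conjunct2] eps(1) eps_lln[of 1 0] A_lln]
  note control_radius = did_control_radius[where S = "space M" and M = M and Y = Y and A = A
      and e = ?e and v = ?v and \<beta> = "\<delta> 1" and \<psi> = \<psi>,
      OF diff groups[THEN conjunct1] eps]
  show ?thesis
    unfolding group_mean_def[symmetric]
    using treated_radius control_radius p_range by auto
qed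

end
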